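(* Let $\mathbf{Q}(t)=(Q_1(t),\ldots,Q_K(t))$, $t\in\{0,1,2,\ldots\}$, be a stochastic vector process with real-valued components, let $L(\mathbf{Q})=\frac{1}{2}\sum_{k=1}^Kw_kQ_k^2$ with constants $w_k>0$, $\delta(t)=L(\mathbf{Q}(t+1))-L(\mathbf{Q}(t))$ and $d_k(t)=Q_k(t+1)-Q_k(t)$. Suppose there is a finite constant $D>0$ such that $\mathbb{E}[d_k(t)^4\mid\mathbf{Q}(t)]\leq D$ for all $k\in\{1,\ldots,K\}$, all $t$ and all possible $\mathbf{Q}(t)$, and that $\sum_{t=1}^\infty\mathbb{E}[Q_k(t)^2]/t^2<\infty$ for all $k$. Then $\sum_{t=1}^\infty\mathbb{E}[\delta(t)^2]/t^2<\infty$.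
   Context: "For all possible $\mathbf{Q}(t)$" means for every realization (almost surely). *)

theory Defs
  imports "HOL-Probability.Probability"
begin

definition lyap :: "real^'k::finite \<Rightarrow> real^'k \<Rightarrow> real" where
  "lyap w q = (1/2) * (\<Sum>k\<in>UNIV. w$k * (q$k)^2)"

definition gen_sigma :: "'a measure \<Rightarrow> ('a \<Rightarrow> real^'k::finite) \<Rightarrow> 'a measure" where
  "gen_sigma M X = vimage_algebra (space M) X borel"

end

theory Submission
  imports Defs
begin

text \<open>Write \<open>d = Q(t+1) - Q(t)\<close>. Then \<open>\<delta>(t) = \<Sum>\<^sub>k w\<^sub>k (Q\<^sub>k d\<^sub>k + d\<^sub>k\<^sup>2/2)\<close>, and Cauchy-Schwarz
  together with two AM-GM steps gives \<open>\<delta>(t)\<^sup>2 \<le> K \<Sum>\<^sub>k w\<^sub>k\<^sup>2 (Q\<^sub>k\<^sup>2 + Q\<^sub>k\<^sup>2 d\<^sub>k\<^sup>4 + d\<^sub>k\<^sup>4)\<close>.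
  Since \<open>Q\<^sub>k(t)\<^sup>2\<close> is \<open>Q(t)\<close>-measurable, conditioning on \<open>Q(t)\<close> bounds the expectation of
  the right-hand side by \<open>K \<Sum>\<^sub>k w\<^sub>k\<^sup>2 ((1 + D) \<bbbE>[Q\<^sub>k(t)\<^sup>2] + D)\<close>, and both resulting series
  converge after division by \<open>t\<^sup>2\<close>.\<close>

lemma lyap_diff:
  "lyap w b - lyap w a = (\<Sum>k\<in>UNIV. w$k * (a$k * (b$k - a$k) + (b$k - a$k)^2 / 2))"
  unfolding lyap_def right_diff_distrib[symmetric] sum_subtractf[symmetric] sum_distrib_left
  by (rule sum.cong) (auto simp: power2_eq_square field_simps)

lemma increment_term_square_le:
  fixes a d :: real
  shows "(a * d + d^2 / 2)^2 \<le> a^2 + a^2 * d^4 + d^4"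
proof -
  have "(a * d + d^2 / 2)^2 = a^2 * d^2 + a * d * d^2 + d^4 / 4"
    by (simp add: power2_eq_square power4_eq_xxxx algebra_simps)
  moreover have "a * d * d^2 \<le> a^2 * d^2 + d^4 / 4"
    using zero_le_power2[of "a * d - d^2 / 2"]
    by (simp add: power2_eq_square power4_eq_xxxx algebra_simps)
  moreover have "2 * (a^2 * d^2) \<le> a^2 + a^2 * d^4"
    using zero_le_power2[of "a * (1 - d^2)"]
    by (simp add: power2_eq_square power4_eq_xxxx algebra_simps)
  moreover have "0 \<le> d^4" by simp
  ultimately show ?thesis by linarith
qed

lemma lyap_diff_square_le:
  fixes a b w :: "real^'k::finite"
  shows "(lyap w b - lyap w a)^2 \<le> (\<Sum>k\<in>UNIV. real CARD('k) * (w$k)^2 *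
      ((a$k)^2 + (a$k)^2 * (b$k - a$k)^4 + (b$k - a$k)^4))"
proof -
  have "(lyap w b - lyap w a)^2
      \<le> (\<Sum>k\<in>UNIV. (w$k * (a$k * (b$k - a$k) + (b$k - a$k)^2 / 2))^2) * real CARD('k)"
    unfolding lyap_diff by (rule sum_squared_le_sum_of_squares)
  also have "\<dots> \<le> (\<Sum>k\<in>UNIV. (w$k)^2 * ((a$k)^2 + (a$k)^2 * (b$k - a$k)^4 + (b$k - a$k)^4))
      * real CARD('k)"
    by (intro mult_right_mono sum_mono)
      (simp_all add: power_mult_distrib mult_left_mono increment_term_square_le)
  finally show ?thesis by (simp add: sum_distrib_left mult_ac)
qed

lemma vec_nth_borel_measurable[measurable]: "(\<lambda>v::real^'k::finite. v $ k) \<in> borel_measurable borel"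
  by (intro borel_measurable_continuous_onI continuous_intros)

lemma (in sigma_finite_subalgebra) nn_integral_mult_le_of_nn_cond_exp_le:
  assumes f: "f \<in> borel_measurable F" and g: "g \<in> borel_measurable M"
    and bound: "AE x in M. nn_cond_exp M F g x \<le> c"
  shows "(\<integral>\<^sup>+ x. f x * g x \<partial>M) \<le> c * (\<integral>\<^sup>+ x. f x \<partial>M)"
proof -
  have fM: "f \<in> borel_measurable M"
    using f subalg by (meson borel_measurable_subalgebra subalgebra_def)
  have "(\<integral>\<^sup>+ x. f x * g x \<partial>M) = (\<integral>\<^sup>+ x. f x * nn_cond_exp M F g x \<partial>M)"
    using nn_cond_exp_intg[OF f g] by simp
  also have "\<dots> \<le> (\<integral>\<^sup>+ x. c * f x \<partial>M)"
    using bound by (intro nn_integral_mono_AE)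
      (auto elim!: eventually_mono simp: mult.commute[of "f _"] intro: mult_right_mono)
  also have "\<dots> = c * (\<integral>\<^sup>+ x. f x \<partial>M)"
    using fM by (rule nn_integral_cmult)
  finally show ?thesis .
qed

lemma finite_measure_subalgebra_gen_sigma:
  assumes "prob_space M" and "X \<in> borel_measurable M"
  shows "finite_measure_subalgebra M (gen_sigma M X)"
proof -
  interpret prob_space M by fact
  have "sets (gen_sigma M X) \<subseteq> sets M"
    unfolding gen_sigma_def using sets_vimage_algebra2[of X "space M" borel] assms(2)
    by (auto intro: measurable_sets)
  then have "subalgebra M (gen_sigma M X)"
    unfolding subalgebra_def gen_sigma_def by simp
  then show ?thesis by unfold_locales
qed

lemma measurable_gen_sigma: "X \<in> borel_measurable (gen_sigma M X)"
  unfolding gen_sigma_def by (rule measurable_vimage_algebra1) simp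

lemma nn_integral_increment_moments_le:
  fixes X Y :: "'a \<Rightarrow> real^'k::finite"
  assumes "prob_space M" and [measurable]: "X \<in> borel_measurable M" "Y \<in> borel_measurable M"
    and "D \<ge> 0"
    and fourth: "AE x in M.
      nn_cond_exp M (gen_sigma M X) (\<lambda>y. ennreal ((Y y $ k - X y $ k)^4)) x \<le> ennreal D"
  shows "(\<integral>\<^sup>+ x. ennreal ((X x$k)^2 + (X x$k)^2 * (Y x$k - X x$k)^4 + (Y x$k - X x$k)^4) \<partial>M)
    \<le> ennreal (1 + D) * (\<integral>\<^sup>+ x. ennreal ((X x$k)^2) \<partial>M) + ennreal D"
proof -
  interpret prob_space M by fact
  interpret finite_measure_subalgebra M "gen_sigma M X"
    using finite_measure_subalgebra_gen_sigma assms(1,2) .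
  note [measurable] = measurable_gen_sigma[of X M]
  define A where "A x = ennreal ((X x$k)^2)" for x
  define E where "E x = ennreal ((Y x$k - X x$k)^4)" for x
  have [measurable]: "A \<in> borel_measurable M" "E \<in> borel_measurable M"
    unfolding A_def E_def by measurable
  have AE: "(\<integral>\<^sup>+ x. A x * E x \<partial>M) \<le> ennreal D * (\<integral>\<^sup>+ x. A x \<partial>M)"
    using fourth unfolding A_def E_def by (intro nn_integral_mult_le_of_nn_cond_exp_le) measurable
  have E: "(\<integral>\<^sup>+ x. 1 * E x \<partial>M) \<le> ennreal D * (\<integral>\<^sup>+ x. 1 \<partial>M)"
    using fourth unfolding E_def by (intro nn_integral_mult_le_of_nn_cond_exp_le) measurable
  have "(\<lambda>x. ennreal ((X x$k)^2 + (X x$k)^2 * (Y x$k - X x$k)^4 + (Y x$k - X x$k)^4))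
      = (\<lambda>x. A x + A x * E x + E x)"
    by (simp add: A_def E_def ennreal_mult)
  then have "(\<integral>\<^sup>+ x. ennreal ((X x$k)^2 + (X x$k)^2 * (Y x$k - X x$k)^4 + (Y x$k - X x$k)^4) \<partial>M)
      = (\<integral>\<^sup>+ x. A x \<partial>M) + (\<integral>\<^sup>+ x. A x * E x \<partial>M) + (\<integral>\<^sup>+ x. E x \<partial>M)"
    by (simp add: nn_integral_add)
  also have "\<dots> \<le> (\<integral>\<^sup>+ x. A x \<partial>M) + ennreal D * (\<integral>\<^sup>+ x. A x \<partial>M) + ennreal D"
    using AE E by (intro add_mono) (simp_all add: emeasure_space_1)
  also have "\<dots> = ennreal (1 + D) * (\<integral>\<^sup>+ x. ennreal ((X x$k)^2) \<partial>M) + ennreal D"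
    using \<open>D \<ge> 0\<close> by (simp add: A_def ennreal_plus distrib_right)
  finally show ?thesis .
qed

lemma nn_integral_lyap_increment_square_le:
  fixes X Y :: "'a \<Rightarrow> real^'k::finite"
  assumes "prob_space M" and [measurable]: "X \<in> borel_measurable M" "Y \<in> borel_measurable M"
    and "D \<ge> 0"
    and fourth: "\<And>k. AE x in M.
      nn_cond_exp M (gen_sigma M X) (\<lambda>y. ennreal ((Y y $ k - X y $ k)^4)) x \<le> ennreal D"
  shows "(\<integral>\<^sup>+ x. ennreal ((lyap w (Y x) - lyap w (X x))^2) \<partial>M)
    \<le> (\<Sum>k\<in>UNIV. ennreal (real CARD('k) * (w$k)^2) *
          (ennreal (1 + D) * (\<integral>\<^sup>+ x. ennreal ((X x$k)^2) \<partial>M) + ennreal D))"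
proof -
  define T where "T k x = (X x$k)^2 + (X x$k)^2 * (Y x$k - X x$k)^4 + (Y x$k - X x$k)^4" for k x
  have "(\<integral>\<^sup>+ x. ennreal ((lyap w (Y x) - lyap w (X x))^2) \<partial>M)
      \<le> (\<integral>\<^sup>+ x. (\<Sum>k\<in>UNIV. ennreal (real CARD('k) * (w$k)^2) * ennreal (T k x)) \<partial>M)"
  proof (rule nn_integral_mono)
    fix x
    have T_nonneg: "0 \<le> T k x" for k
      unfolding T_def by simp
    have "ennreal ((lyap w (Y x) - lyap w (X x))^2)
        \<le> ennreal (\<Sum>k\<in>UNIV. real CARD('k) * (w$k)^2 * T k x)"
      unfolding T_def by (rule ennreal_leI lyap_diff_square_le)+
    also have "\<dots> = (\<Sum>k\<in>UNIV. ennreal (real CARD('k) * (w$k)^2) * ennreal (T k x))"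
      using T_nonneg by (simp add: ennreal_mult flip: sum_ennreal)
    finally show "ennreal ((lyap w (Y x) - lyap w (X x))^2) \<le> \<dots>" .
  qed
  also have "\<dots> = (\<Sum>k\<in>UNIV. ennreal (real CARD('k) * (w$k)^2) * (\<integral>\<^sup>+ x. ennreal (T k x) \<partial>M))"
    unfolding T_def by (simp add: nn_integral_sum nn_integral_cmult)
  also have "\<dots> \<le> (\<Sum>k\<in>UNIV. ennreal (real CARD('k) * (w$k)^2) *
          (ennreal (1 + D) * (\<integral>\<^sup>+ x. ennreal ((X x$k)^2) \<partial>M) + ennreal D))"
    unfolding T_def using assms
    by (intro sum_mono mult_left_mono nn_integral_increment_moments_le) simp_all
  finally show ?thesis .
qed

lemma suminf_ennreal_inverse_Suc_square_finite:
  "(\<Sum>t. ennreal (1 / (real (Suc t))^2)) < \<infinity>"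
proof -
  have "summable (\<lambda>t. 1 / (real (Suc t))^2)"
    using inverse_power_summable[of 2, where 'a=real] by (subst summable_Suc_iff) (simp add: field_simps)
  then have "(\<Sum>t. ennreal (1 / (real (Suc t))^2)) \<noteq> \<top>"
    by (rule ennreal_suminf_neq_top) simp
  then show ?thesis by (simp add: top.not_eq_extremum)
qed

lemma suminf_weighted_sum_finite:
  fixes C :: "'k::finite \<Rightarrow> ennreal" and I :: "'k \<Rightarrow> nat \<Rightarrow> ennreal"
  assumes "\<And>k. C k < \<infinity>" and "a < \<infinity>" and "b < \<infinity>"
    and "\<And>k. (\<Sum>t. I k t * r t) < \<infinity>" and "(\<Sum>t. r t) < \<infinity>"
  shows "(\<Sum>t. (\<Sum>k\<in>UNIV. C k * (a * I k t + b)) * r t) < \<infinity>"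
proof -
  have "(\<Sum>t. (\<Sum>k\<in>UNIV. C k * (a * I k t + b)) * r t)
      = (\<Sum>t. \<Sum>k\<in>UNIV. C k * a * (I k t * r t) + C k * b * r t)"
    by (simp only: sum_distrib_right) (simp add: algebra_simps)
  also have "\<dots> = (\<Sum>k\<in>UNIV. \<Sum>t. C k * a * (I k t * r t) + C k * b * r t)"
    by (rule suminf_sum) (rule summableI)
  also have "\<dots> = (\<Sum>k\<in>UNIV. C k * a * (\<Sum>t. I k t * r t) + C k * b * (\<Sum>t. r t))"
    by (simp add: suminf_add[symmetric])
  also have "\<dots> < \<infinity>"
    using assms by (simp add: sum_Pinfty ennreal_mult_less_top)
  finally show ?thesis .
qed

theorem lemma2:
  fixes M :: "'a measure" and Q :: "nat \<Rightarrow> 'a \<Rightarrow> real^'k::finite"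
    and w :: "real^'k" and D :: real
  assumes "prob_space M"
    and meas: "\<And>t. Q t \<in> borel_measurable M"
    and w_pos: "\<And>k. w$k > 0"
    and D_pos: "D > 0"
    and fourth: "\<And>k t. AE x in M.
         nn_cond_exp M (gen_sigma M (Q t)) (\<lambda>y. ennreal ((Q (Suc t) y $ k - Q t y $ k) ^ 4)) x
           \<le> ennreal D"
    and second: "\<And>k. (\<Sum>t. (\<integral>\<^sup>+ x. ennreal ((Q (Suc t) x $ k)^2) \<partial>M)
                              * ennreal (1 / (real (Suc t))^2)) < \<infinity>"
  shows "(\<Sum>t. (\<integral>\<^sup>+ x. ennreal ((lyap w (Q (Suc t + 1) x) - lyap w (Q (Suc t) x))^2) \<partial>M)
               * ennreal (1 / (real (Suc t))^2)) < \<infinity>"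
proof -
  define r where "r t = ennreal (1 / (real (Suc t))^2)" for t
  define I where "I k t = (\<integral>\<^sup>+ x. ennreal ((Q (Suc t) x $ k)^2) \<partial>M)" for k t
  define C where "C k = ennreal (real CARD('k) * (w$k)^2)" for k
  have "(\<Sum>t. (\<integral>\<^sup>+ x. ennreal ((lyap w (Q (Suc t + 1) x) - lyap w (Q (Suc t) x))^2) \<partial>M) * r t)
      \<le> (\<Sum>t. (\<Sum>k\<in>UNIV. C k * (ennreal (1 + D) * I k t + ennreal D)) * r t)"
    using nn_integral_lyap_increment_square_le[OF \<open>prob_space M\<close> meas meas, of D]
      fourth D_pos
    unfolding C_def I_def by (intro suminf_le mult_right_mono summableI) simp_all
  also have "\<dots> < \<infinity>"
    using second suminf_ennreal_inverse_Suc_square_finite unfolding r_def I_def C_def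
    by (intro suminf_weighted_sum_finite) simp_all
  finally show ?thesis unfolding r_def .
qed

end
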